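(* Let $\tilde{\bm{w}}_1,\dots,\tilde{\bm{w}}_n\in\mathbb{R}^d$ and let $k\ge1$ be an integer. Suppose there exists a $k$-dimensional subspace $\bm{V}^*\subseteq\mathbb{R}^d$ with $d(\tilde{\bm{w}}_i,\bm{V}^* )\le\epsilon_{acc}$ for all $i\in[n]$. Let $(\bm{X}^*,t^* )$ be an optimal solution of the semidefinite program $\min_{\bm{X},t}\ t$ subject to $\tilde{\bm{w}}_i^\top\bm{X}\tilde{\bm{w}}_i\le t$ for $1\le i\le n$, $0\preceq\bm{X}\preceq I$, $\mathrm{Tr}(\bm{X})=d-k$, and let $\bm{X}^*=\sum_{i=1}^d\lambda_i\bm{u}_i\bm{u}_i^\top$ be an eigendecomposition with orthonormal $\bm{u}_i$ and $0\le\lambda_1\le\cdots\le\lambda_d\le1$. Then for any constant $c>1$ such that $ck$ is an integer with $ck\le d$, the $(ck-1)$-dimensional subspace $\bm{V}'=\mathrm{span}(\bm{u}_1,\dots,\bm{u}_{ck-1})$ satisfies $d(\tilde{\bm{w}}_i,\bm{V}')\le\sqrt{1+\frac{1}{c-1}}\,\epsilon_{acc}$ for all $i\in[n]$. In particular, for $c=2$, $\bm{V}'=\mathrm{span}(\bm{u}_1,\dots,\bm{u}_{2k-1})$ is a $(2k-1)$-dimensional subspace with $d(\tilde{\bm{w}}_i,\bm{V}')\le\sqrt{2}\,\epsilon_{acc}$ for all $i\in[n]$.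
   Context: For a vector $\bm{u}$ and subspace $\bm{F}$, $d(\bm{u},\bm{F})=\min_{\bm{v}\in\bm{F}}\|\bm{u}-\bm{v}\|_2$ is the orthogonal distance. $\preceq$ is the Loewner order on symmetric matrices. *)

theory Defs
  imports "HOL-Analysis.Analysis"
begin

definition psd :: "real^'n^'n \<Rightarrow> bool" where
  "psd A \<longleftrightarrow> transpose A = A \<and> (\<forall>x. 0 \<le> x \<bullet> (A *v x))"

definition loewner_le :: "real^'n^'n \<Rightarrow> real^'n^'n \<Rightarrow> bool" (infix "\<preceq>\<^sub>L" 50) where
  "A \<preceq>\<^sub>L B \<longleftrightarrow> transpose A = A \<and> transpose B = B \<and> psd (B - A)"

definition outer :: "real^'n \<Rightarrow> real^'n \<Rightarrow> real^'n^'n" where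
  "outer u v = (\<chi> a b. u $ a * v $ b)"

definition sdp_feasible :: "nat \<Rightarrow> (nat \<Rightarrow> real^'d) \<Rightarrow> nat \<Rightarrow> real^'d^'d \<Rightarrow> real \<Rightarrow> bool" where
  "sdp_feasible n w k X t \<longleftrightarrow>
     (\<forall>i\<in>{1..n}. w i \<bullet> (X *v w i) \<le> t) \<and>
     0 \<preceq>\<^sub>L X \<and> X \<preceq>\<^sub>L mat 1 \<and> trace X = real CARD('d) - real k"

definition sdp_optimal :: "nat \<Rightarrow> (nat \<Rightarrow> real^'d) \<Rightarrow> nat \<Rightarrow> real^'d^'d \<Rightarrow> real \<Rightarrow> bool" where
  "sdp_optimal n w k X t \<longleftrightarrow> sdp_feasible n w k X t \<and>
     (\<forall>(X'::real^'d^'d) t'. sdp_feasible n w k X' t' \<longrightarrow> t \<le> t')"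

end

theory Submission
  imports Defs
begin

(* The complement I - P of the orthogonal projection P onto Vstar is feasible with value eps^2,
   since w^T (I - P) w = d(w, Vstar)^2; hence the optimum satisfies w_i^T Xs w_i <= ts <= eps^2.
   The eigenvalues of Xs lie in [0,1] and sum to d - k, so the m-th smallest one, m = ck, is at
   least 1 - k/m = 1 - 1/c.  In the eigenbasis, w^T Xs w >= lambda_m * sum_{j >= m} (u_j . w)^2,
   and the latter sum is d(w, span(u_1, ..., u_{m-1}))^2.  Thus this squared distance is at most
   eps^2 / (1 - 1/c) = (1 + 1/(c-1)) eps^2. *)

definition orthonormal_on :: "'i set \<Rightarrow> ('i \<Rightarrow> 'a::real_inner) \<Rightarrow> bool" where
  "orthonormal_on I u \<longleftrightarrow> (\<forall>i\<in>I. \<forall>j\<in>I. u i \<bullet> u j = (if i = j then 1 else 0))"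

definition orthonormal_proj :: "'i set \<Rightarrow> ('i \<Rightarrow> 'a::real_inner) \<Rightarrow> 'a \<Rightarrow> 'a" where
  "orthonormal_proj J u x = (\<Sum>j\<in>J. (u j \<bullet> x) *\<^sub>R u j)"

lemma orthonormal_on_subset: "orthonormal_on I u \<Longrightarrow> J \<subseteq> I \<Longrightarrow> orthonormal_on J u"
  unfolding orthonormal_on_def by blast

lemma inner_sum_orthonormal_on:
  assumes "finite J" "orthonormal_on J u" "i \<in> J"
  shows "(\<Sum>j\<in>J. a j *\<^sub>R u j) \<bullet> u i = a i"
proof -
  have "(\<Sum>j\<in>J. a j *\<^sub>R u j) \<bullet> u i = (\<Sum>j\<in>J. if j = i then a j else 0)"
    unfolding inner_sum_left using assms(2,3) by (intro sum.cong) (auto simp: orthonormal_on_def)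
  then show ?thesis using assms(1,3) by simp
qed

lemma norm_sum_orthonormal_on:
  assumes "finite J" "orthonormal_on J u"
  shows "(norm (\<Sum>j\<in>J. a j *\<^sub>R u j))\<^sup>2 = (\<Sum>j\<in>J. (a j)\<^sup>2)"
proof -
  have "pairwise (\<lambda>i j. orthogonal (a i *\<^sub>R u i) (a j *\<^sub>R u j)) J"
    using assms(2) by (auto simp: pairwise_def orthogonal_def orthonormal_on_def)
  moreover have "norm (u j) = 1" if "j \<in> J" for j
    using assms(2) that by (simp add: orthonormal_on_def norm_eq_1)
  ultimately show ?thesis using assms(1) by (simp add: norm_sum_Pythagorean)
qed

lemma orthonormal_on_inj_on: "orthonormal_on J u \<Longrightarrow> inj_on u J"
proof
  fix i j assume "orthonormal_on J u" "i \<in> J" "j \<in> J" "u i = u j"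
  then have "u i \<bullet> u j = u i \<bullet> u i" by simp
  with \<open>orthonormal_on J u\<close> \<open>i \<in> J\<close> \<open>j \<in> J\<close> show "i = j"
    by (auto simp: orthonormal_on_def split: if_splits)
qed

lemma orthonormal_on_independent:
  assumes "orthonormal_on J u"
  shows "independent (u ` J)"
proof (rule pairwise_orthogonal_independent)
  show "pairwise orthogonal (u ` J)"
    using assms by (auto simp: pairwise_def orthogonal_def orthonormal_on_def)
  show "0 \<notin> u ` J"
    using assms by (force simp: orthonormal_on_def)
qed

lemma dim_span_orthonormal_on: "orthonormal_on J u \<Longrightarrow> dim (span (u ` J)) = card J"
  using dim_span_eq_card_independent[OF orthonormal_on_independent] card_image[OF orthonormal_on_inj_on]
  by metis

lemma orthonormal_proj_in_span: "orthonormal_proj J u x \<in> span (u ` J)"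
  unfolding orthonormal_proj_def by (intro span_sum span_mul span_base) auto

lemma orthogonal_residual_span:
  assumes "finite J" "orthonormal_on J u" "y \<in> span (u ` J)"
  shows "orthogonal (x - orthonormal_proj J u x) y"
proof (rule orthogonal_to_span[OF assms(3)])
  fix v assume "v \<in> u ` J"
  then obtain i where "i \<in> J" "v = u i" by blast
  moreover have "orthonormal_proj J u x \<bullet> u i = u i \<bullet> x"
    unfolding orthonormal_proj_def using assms(1,2) \<open>i \<in> J\<close> by (rule inner_sum_orthonormal_on)
  ultimately show "orthogonal (x - orthonormal_proj J u x) v"
    by (simp add: orthogonal_def inner_diff_left inner_commute[of x])
qed

lemma inner_residual_orthonormal_proj:
  assumes "finite J" "orthonormal_on J u"
  shows "x \<bullet> (x - orthonormal_proj J u x) = (norm (x - orthonormal_proj J u x))\<^sup>2"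
proof -
  have "orthogonal (x - orthonormal_proj J u x) (orthonormal_proj J u x)"
    by (rule orthogonal_residual_span[OF assms orthonormal_proj_in_span])
  then show ?thesis
    by (simp add: power2_norm_eq_inner orthogonal_def inner_diff_left inner_commute)
qed

lemma infdist_span_orthonormal_on:
  assumes "finite J" "orthonormal_on J u"
  shows "infdist x (span (u ` J)) = norm (x - orthonormal_proj J u x)"
proof (rule antisym)
  show "infdist x (span (u ` J)) \<le> norm (x - orthonormal_proj J u x)"
    using infdist_le[OF orthonormal_proj_in_span] by (simp add: dist_norm)
  have "norm (x - orthonormal_proj J u x) \<le> dist x y" if "y \<in> span (u ` J)" for y
  proof -
    have "orthonormal_proj J u x - y \<in> span (u ` J)"
      using that orthonormal_proj_in_span by (rule span_diff[rotated])
    then have "(norm ((x - orthonormal_proj J u x) + (orthonormal_proj J u x - y)))\<^sup>2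
        = (norm (x - orthonormal_proj J u x))\<^sup>2 + (norm (orthonormal_proj J u x - y))\<^sup>2"
      by (intro norm_add_Pythagorean orthogonal_residual_span[OF assms])
    then have "(norm (x - orthonormal_proj J u x))\<^sup>2 \<le> (norm (x - y))\<^sup>2"
      by simp
    then show ?thesis
      unfolding dist_norm by (rule power2_le_imp_le) simp
  qed
  moreover have ne: "span (u ` J) \<noteq> {}"
    using span_zero by blast
  ultimately show "norm (x - orthonormal_proj J u x) \<le> infdist x (span (u ` J))"
    unfolding infdist_notempty[OF ne] by (intro cINF_greatest[OF ne])
qed

lemma orthonormal_proj_complete:
  fixes u :: "'i \<Rightarrow> 'a::euclidean_space"
  assumes "finite I" "card I = DIM('a)" "orthonormal_on I u"
  shows "orthonormal_proj I u x = x"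
proof -
  have "UNIV \<subseteq> span (u ` I)"
    using assms by (intro card_ge_dim_independent)
      (simp_all add: orthonormal_on_independent card_image orthonormal_on_inj_on)
  then have "x - orthonormal_proj I u x \<in> span (u ` I)"
    by blast
  then have "orthogonal (x - orthonormal_proj I u x) (x - orthonormal_proj I u x)"
    by (rule orthogonal_residual_span[OF assms(1,3)])
  then show ?thesis
    by (simp add: orthogonal_self)
qed

lemma norm_residual_orthonormal_proj:
  fixes u :: "'i \<Rightarrow> 'a::euclidean_space"
  assumes "finite I" "card I = DIM('a)" "orthonormal_on I u" "J \<subseteq> I"
  shows "(norm (x - orthonormal_proj J u x))\<^sup>2 = (\<Sum>j\<in>I - J. (u j \<bullet> x)\<^sup>2)"
proof -
  have "x = orthonormal_proj I u x"
    by (rule orthonormal_proj_complete[OF assms(1-3), symmetric])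
  also have "\<dots> = orthonormal_proj (I - J) u x + orthonormal_proj J u x"
    unfolding orthonormal_proj_def by (rule sum.subset_diff[OF assms(4,1)])
  finally have "x - orthonormal_proj J u x = orthonormal_proj (I - J) u x"
    by (simp add: algebra_simps)
  then show ?thesis
    unfolding orthonormal_proj_def using assms(1,3)
    by (simp add: norm_sum_orthonormal_on orthonormal_on_subset)
qed

lemma infdist_span_le_weighted_sum:
  fixes u :: "'i \<Rightarrow> 'a::euclidean_space"
  assumes "finite I" "card I = DIM('a)" "orthonormal_on I u" "J \<subseteq> I"
    and "\<forall>j\<in>J. 0 \<le> lam j" "\<forall>j\<in>I - J. mu \<le> lam j"
  shows "mu * (infdist x (span (u ` J)))\<^sup>2 \<le> (\<Sum>j\<in>I. lam j * (u j \<bullet> x)\<^sup>2)"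
proof -
  have "finite J" "orthonormal_on J u"
    using assms(1,3,4) by (auto intro: finite_subset orthonormal_on_subset)
  then have "mu * (infdist x (span (u ` J)))\<^sup>2 = (\<Sum>j\<in>I - J. mu * (u j \<bullet> x)\<^sup>2)"
    using norm_residual_orthonormal_proj[OF assms(1-4)]
    by (simp add: infdist_span_orthonormal_on sum_distrib_left)
  also have "\<dots> \<le> (\<Sum>j\<in>I - J. lam j * (u j \<bullet> x)\<^sup>2)"
    using assms(6) by (intro sum_mono mult_right_mono) auto
  also have "\<dots> \<le> (\<Sum>j\<in>I. lam j * (u j \<bullet> x)\<^sup>2)"
    using assms(1,5) by (intro sum_mono2) auto
  finally show ?thesis .
qed

lemma outer_mult_vec: "outer u v *v x = (v \<bullet> x) *\<^sub>R u"
  by (simp add: vec_eq_iff outer_def matrix_vector_mult_def inner_vec_def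
      sum_distrib_left mult.commute mult.left_commute)

lemma sum_matrix_vector_mult: "(\<Sum>i\<in>I. A i) *v x = (\<Sum>i\<in>I. A i *v x)"
  unfolding vec_eq_iff matrix_vector_mult_def
  by (simp add: sum_component sum_distrib_right) (intro allI sum.swap)

lemma sum_outer_mult_vec:
  "(\<Sum>i\<in>I. lam i *\<^sub>R outer (u i) (u i)) *v x = (\<Sum>i\<in>I. (lam i * (u i \<bullet> x)) *\<^sub>R u i)"
  by (simp add: sum_matrix_vector_mult scaleR_matrix_vector_assoc[symmetric] outer_mult_vec)

lemma quadratic_form_sum_outer:
  "x \<bullet> ((\<Sum>i\<in>I. lam i *\<^sub>R outer (u i) (u i)) *v x) = (\<Sum>i\<in>I. lam i * (u i \<bullet> x)\<^sup>2)"
  by (simp add: sum_outer_mult_vec inner_sum_right power2_eq_square inner_commute mult_ac)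

lemma trace_sum_outer:
  "trace (\<Sum>i\<in>I. lam i *\<^sub>R outer (u i) (u i)) = (\<Sum>i\<in>I. lam i * (u i \<bullet> u i))"
  by (simp add: trace_def sum_component outer_def inner_vec_def sum_distrib_left)
    (rule sum.swap)

lemma transpose_sum_outer:
  "transpose (\<Sum>i\<in>I. lam i *\<^sub>R outer (u i) (u i)) = (\<Sum>i\<in>I. lam i *\<^sub>R outer (u i) (u i))"
  by (simp add: vec_eq_iff transpose_def sum_component outer_def mult.commute)

lemma transpose_diff: "transpose (A - B) = transpose A - transpose (B :: 'a::ab_group_add^'n^'m)"
  by (simp add: vec_eq_iff transpose_def)

lemma sdp_feasible_of_close_subspace:
  fixes w :: "nat \<Rightarrow> real^'d"
  assumes "subspace V" "dim V = k" "\<forall>i\<in>{1..n}. infdist (w i) V \<le> eps"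
  shows "\<exists>X. sdp_feasible n w k X (eps\<^sup>2)"
proof -
  obtain B where "pairwise orthogonal B" "\<And>x. x \<in> B \<Longrightarrow> norm x = 1"
    "independent B" "card B = dim V" and V: "span B = V"
    using orthonormal_basis_subspace[OF assms(1)] by metis
  then have fin: "finite B" and onb: "orthonormal_on B id" and card: "card B = k"
    using assms(2) by (auto simp: orthonormal_on_def pairwise_def orthogonal_def norm_eq_1
        intro: independent_imp_finite)
  define P :: "real^'d^'d" where "P = (\<Sum>b\<in>B. 1 *\<^sub>R outer (id b) (id b))"
  define X where "X = mat 1 - P"
  have P_sym: "transpose P = P"
    unfolding P_def by (rule transpose_sum_outer)
  then have X_sym: "transpose X = X"
    by (simp add: X_def transpose_diff)
  have "P *v x = orthonormal_proj B id x" for x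
    unfolding P_def orthonormal_proj_def sum_outer_mult_vec by simp
  then have X_quad: "x \<bullet> (X *v x) = (infdist x V)\<^sup>2" for x
    using inner_residual_orthonormal_proj[OF fin onb] infdist_span_orthonormal_on[OF fin onb]
    by (simp add: X_def matrix_vector_mult_diff_rdistrib V)
  have "psd X"
    unfolding psd_def using X_sym X_quad by simp
  then have "0 \<preceq>\<^sub>L X"
    using X_sym by (simp add: loewner_le_def vec_eq_iff transpose_def)
  have "psd P"
    unfolding psd_def P_def quadratic_form_sum_outer using P_sym by (simp add: P_def sum_nonneg)
  then have "X \<preceq>\<^sub>L mat 1"
    using X_sym by (simp add: loewner_le_def X_def)
  have "trace P = real k"
    using onb card unfolding P_def trace_sum_outer by (simp add: orthonormal_on_def)
  then have "trace X = real CARD('d) - real k"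
    by (simp add: X_def trace_sub trace_I)
  moreover have "w i \<bullet> (X *v w i) \<le> eps\<^sup>2" if "i \<in> {1..n}" for i
    using assms(3) that by (simp add: X_quad power_mono infdist_nonneg)
  ultimately show ?thesis
    using \<open>0 \<preceq>\<^sub>L X\<close> \<open>X \<preceq>\<^sub>L mat 1\<close> unfolding sdp_feasible_def by blast
qed

lemma sum_sorted_le:
  fixes lam :: "nat \<Rightarrow> real"
  assumes "mono_on {1..d} lam" "\<forall>j\<in>{1..d}. lam j \<le> 1" "m \<in> {1..d}"
  shows "(\<Sum>j=1..d. lam j) \<le> real m * lam m + real (d - m)"
proof -
  have "{1..d} = {1..m} \<union> {Suc m..d}" "{1..m} \<inter> {Suc m..d} = {}"
    using assms(3) by auto
  then have "(\<Sum>j=1..d. lam j) = (\<Sum>j=1..m. lam j) + (\<Sum>j=Suc m..d. lam j)"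
    by (simp add: sum.union_disjoint)
  also have "\<dots> \<le> real (card {1..m}) * lam m + real (card {Suc m..d}) * 1"
    using assms by (intro add_mono sum_bounded_above) (auto simp: mono_on_def)
  finally show ?thesis
    by simp
qed

lemma sorted_eigenvalue_lower_bound:
  fixes lam :: "nat \<Rightarrow> real"
  assumes "mono_on {1..d} lam" "\<forall>j\<in>{1..d}. lam j \<le> 1" "m \<in> {1..d}"
    and "(\<Sum>j=1..d. lam j) = real d - real k"
  shows "1 - real k / real m \<le> lam m"
proof -
  have "real m - real k \<le> real m * lam m"
    using sum_sorted_le[OF assms(1-3)] assms(3,4) by (simp add: of_nat_diff)
  then show ?thesis
    using assms(3) by (simp add: field_simps)
qed

lemma quadratic_form_ge_infdist_span_prefix:
  fixes u :: "nat \<Rightarrow> real^'d" and lam :: "nat \<Rightarrow> real"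
  assumes "orthonormal_on {1..CARD('d)} u" "mono_on {1..CARD('d)} lam"
    and "\<forall>j\<in>{1..CARD('d)}. 0 \<le> lam j" "m \<in> {1..CARD('d)}"
  shows "lam m * (infdist x (span (u ` {1..m - 1})))\<^sup>2
           \<le> x \<bullet> ((\<Sum>i\<in>{1..CARD('d)}. lam i *\<^sub>R outer (u i) (u i)) *v x)"
  unfolding quadratic_form_sum_outer
proof (rule infdist_span_le_weighted_sum[OF _ _ assms(1)])
  show "\<forall>j\<in>{1..CARD('d)} - {1..m - 1}. lam m \<le> lam j"
    using assms(2,4) by (auto simp: mono_on_def)
qed (use assms(3,4) in auto)

lemma infdist_eigenspan_of_sdp_optimal:
  fixes w u :: "nat \<Rightarrow> real^'d" and lam :: "nat \<Rightarrow> real"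
  assumes "subspace V" "dim V = k" "\<forall>i\<in>{1..n}. infdist (w i) V \<le> eps"
    and opt: "sdp_optimal n w k (\<Sum>j\<in>{1..CARD('d)}. lam j *\<^sub>R outer (u j) (u j)) t"
    and onb: "orthonormal_on {1..CARD('d)} u" and lam_mono: "mono_on {1..CARD('d)} lam"
    and lam_bounds: "\<forall>j\<in>{1..CARD('d)}. 0 \<le> lam j \<and> lam j \<le> 1"
    and m: "m \<in> {1..CARD('d)}" and i: "i \<in> {1..n}"
  shows "(1 - real k / real m) * (infdist (w i) (span (u ` {1..m - 1})))\<^sup>2 \<le> eps\<^sup>2"
proof -
  let ?X = "\<Sum>j\<in>{1..CARD('d)}. lam j *\<^sub>R outer (u j) (u j)"
  have feas: "sdp_feasible n w k ?X t" and "t \<le> eps\<^sup>2"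
    using opt sdp_feasible_of_close_subspace[OF assms(1-3)] by (auto simp: sdp_optimal_def)
  then have "(\<Sum>j=1..CARD('d). lam j) = real CARD('d) - real k"
    using onb unfolding sdp_feasible_def trace_sum_outer by (simp add: orthonormal_on_def)
  then have "1 - real k / real m \<le> lam m"
    using sorted_eigenvalue_lower_bound[OF lam_mono _ m] lam_bounds by simp
  then have "(1 - real k / real m) * (infdist (w i) (span (u ` {1..m - 1})))\<^sup>2
               \<le> lam m * (infdist (w i) (span (u ` {1..m - 1})))\<^sup>2"
    by (simp add: mult_right_mono)
  also have "\<dots> \<le> w i \<bullet> (?X *v w i)"
    using lam_bounds by (intro quadratic_form_ge_infdist_span_prefix[OF onb lam_mono _ m]) auto
  also have "\<dots> \<le> t"
    using feas i by (simp add: sdp_feasible_def)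
  finally show ?thesis
    using \<open>t \<le> eps\<^sup>2\<close> by simp
qed

lemma le_sqrt_mult_of_sq_le:
  fixes c y e :: real
  assumes "1 < c" "0 \<le> e" "(1 - 1 / c) * y\<^sup>2 \<le> e\<^sup>2"
  shows "y \<le> sqrt (1 + 1 / (c - 1)) * e"
proof -
  have "y\<^sup>2 \<le> (1 + 1 / (c - 1)) * e\<^sup>2"
    using assms(1,3) by (simp add: field_simps)
  then have "sqrt (y\<^sup>2) \<le> sqrt ((1 + 1 / (c - 1)) * e\<^sup>2)"
    by (rule real_sqrt_le_mono)
  then show ?thesis
    using assms(2) by (simp add: real_sqrt_mult)
qed

theorem theorem5:
  fixes w :: "nat \<Rightarrow> real^'d" and n k :: nat and eps :: real
    and Vstar :: "(real^'d) set"
    and Xs :: "real^'d^'d" and ts :: real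
    and u :: "nat \<Rightarrow> real^'d" and lam :: "nat \<Rightarrow> real"
    and c :: real
  assumes k_ge: "k \<ge> 1"
    and Vstar_sub: "subspace Vstar" and Vstar_dim: "dim Vstar = k"
    and Vstar_close: "\<forall>i\<in>{1..n}. infdist (w i) Vstar \<le> eps"
    and opt: "sdp_optimal n w k Xs ts"
    and orth: "\<forall>i\<in>{1..CARD('d)}. \<forall>j\<in>{1..CARD('d)}. u i \<bullet> u j = (if i = j then 1 else 0)"
    and decomp: "Xs = (\<Sum>i\<in>{1..CARD('d)}. lam i *\<^sub>R outer (u i) (u i))"
    and lam_nonneg: "0 \<le> lam 1"
    and lam_sorted: "\<forall>i\<in>{1..CARD('d)}. \<forall>j\<in>{1..CARD('d)}. i \<le> j \<longrightarrow> lam i \<le> lam j"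
    and lam_le1: "lam CARD('d) \<le> 1"
    and c_gt: "c > 1"
    and ck_int: "c * real k \<in> \<int>"
    and ck_le: "c * real k \<le> real CARD('d)"
  shows "dim (span (u ` {1..nat \<lfloor>c * real k\<rfloor> - 1})) = nat \<lfloor>c * real k\<rfloor> - 1 \<and>
         (\<forall>i\<in>{1..n}. infdist (w i) (span (u ` {1..nat \<lfloor>c * real k\<rfloor> - 1}))
                        \<le> sqrt (1 + 1 / (c - 1)) * eps)"
proof -
  let ?I = "{1..CARD('d)}"
  define m where "m = nat \<lfloor>c * real k\<rfloor>"
  have m_real: "real m = c * real k"
    using ck_int c_gt by (auto simp: m_def elim!: Ints_cases)
  have "real k < real m"
    using m_real c_gt k_ge by (simp add: mult_strict_right_mono[of 1 c "real k", simplified])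
  then have m: "m \<in> ?I" and "real k / real m = 1 / c"
    using m_real ck_le by auto
  have onb: "orthonormal_on ?I u"
    using orth by (simp add: orthonormal_on_def)
  have lam_bounds: "\<forall>j\<in>?I. 0 \<le> lam j \<and> lam j \<le> 1"
  proof
    fix j assume "j \<in> ?I"
    then have "lam 1 \<le> lam j" "lam j \<le> lam CARD('d)"
      using lam_sorted by auto
    then show "0 \<le> lam j \<and> lam j \<le> 1"
      using lam_nonneg lam_le1 by linarith
  qed
  have lam_mono: "mono_on ?I lam"
    using lam_sorted by (auto simp: mono_on_def)
  note infdist_bound = infdist_eigenspan_of_sdp_optimal[OF Vstar_sub Vstar_dim Vstar_close
      opt[unfolded decomp] onb lam_mono lam_bounds m]
  have "{1..m - 1} \<subseteq> ?I"
    using m by auto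
  then have "dim (span (u ` {1..m - 1})) = m - 1"
    using dim_span_orthonormal_on[OF orthonormal_on_subset[OF onb]] by (metis card_atLeastAtMost diff_Suc_1)
  then show ?thesis
    using infdist_bound Vstar_close c_gt \<open>real k / real m = 1 / c\<close> unfolding m_def
    by (auto intro!: le_sqrt_mult_of_sq_le intro: order_trans[OF infdist_nonneg])
qed

end
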